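(* For every composition $\alpha$, $$\Theta_{\mathrm{QSym}}(S_\alpha)=\begin{cases}2^{\ell(\alpha)}S_\alpha & \text{if every part of }\alpha\text{ is odd},\\ 0&\text{otherwise.}\end{cases}$$
   Context: $\mathrm{QSym}$ is the graded connected Hopf algebra of quasisymmetric functions with monomial basis $M_\alpha=\sum_{i_1<\cdots<i_\ell}x_{i_1}^{\alpha_1}\cdots x_{i_\ell}^{\alpha_\ell}$ ($\alpha=(\alpha_1,\dots,\alpha_\ell)$ a composition, $\ell(\alpha)=\ell$), product the ordinary product and coproduct $\Delta(M_\alpha)=\sum_{\beta\gamma=\alpha}M_\beta\otimes M_\gamma$. For compositions $\alpha,\beta$ of $n$, $\beta\le\alpha$ means the set of partial sums $\{\beta_1,\beta_1+\beta_2,\dots\}$ (excluding the total) is contained in that of $\alpha$. Shuffle functions: for $\alpha$ let $\mathrm{OtE}(\alpha)=\{i:\alpha_i\text{ odd},\ \alpha_{i+1}\text{ even}\}=\{i_1<\cdots<i_k\}$ and $m_o(\alpha)=(\alpha_1+\cdots+\alpha_{i_1},\ \alpha_{i_1+1}+\cdots+\alpha_{i_2},\ \dots,\ \alpha_{i_k+1}+\cdots+\alpha_\ell)$. For $m_o(\alpha)\le\beta\le\alpha$, each part $\beta_i$ is a sum of a block of consecutive parts of $\alpha$; with $\mathrm{O}(i),\mathrm{E}(i)$ the numbers of odd and even parts of that block put $c_\alpha^\beta=\prod_i\frac{1}{\mathrm{O}(i)!\mathrm{E}(i)!}$. Then $S_\alpha=\sum_{m_o(\alpha)\le\beta\le\alpha}c_\alpha^\beta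 M_\beta$. Characters: a character of a graded connected Hopf algebra $H$ is a multiplicative linear map $H\to\mathbb{C}$; characters form a group under convolution $\zeta\zeta'=m\circ(\zeta\otimes\zeta')\circ\Delta$, with inverse $\zeta^{-1}=\zeta\circ\mathcal{S}$ ($\mathcal{S}$ the antipode); $\bar\zeta$ is the character equal to $(-1)^n\zeta$ on the degree-$n$ component. Let $\zeta_{\mathrm{QSym}}(f(x_1,x_2,\dots))=f(1,0,0,\dots)$. $\Theta_{\mathrm{QSym}}$ is the unique graded Hopf algebra morphism $\mathrm{QSym}\to\mathrm{QSym}$ with $\zeta_{\mathrm{QSym}}\circ\Theta_{\mathrm{QSym}}=\overline{\zeta_{\mathrm{QSym}}^{-1}}\,\zeta_{\mathrm{QSym}}$ (convolution product). *)

theory Defs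
  imports Complex_Main
begin

definition is_comp :: "nat list \<Rightarrow> bool" where
  "is_comp a \<longleftrightarrow> (\<forall>x\<in>set a. 0 < x)"

definition psum :: "nat list \<Rightarrow> nat \<Rightarrow> nat" where
  "psum a k = sum_list (take k a)"

definition descents :: "nat list \<Rightarrow> nat set" where
  "descents a = {psum a i | i. 0 < i \<and> i < length a}"

definition comp_le :: "nat list \<Rightarrow> nat list \<Rightarrow> bool" where
  "comp_le b a \<longleftrightarrow> is_comp a \<and> is_comp b \<and> sum_list b = sum_list a
      \<and> descents b \<subseteq> descents a"

(* An element of QSym is represented by its coordinate vector f in the basis M:
   f = sum_alpha f(alpha) M_alpha, finitely supported on compositions. *)
definition qsym :: "(nat list \<Rightarrow> complex) \<Rightarrow> bool" where
  "qsym f \<longleftrightarrow> finite {b. f b \<noteq> 0} \<and> (\<forall>b. f b \<noteq> 0 \<longrightarrow> is_comp b)"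

definition M :: "nat list \<Rightarrow> nat list \<Rightarrow> complex" where
  "M a = (\<lambda>b. if b = a then 1 else 0)"

(* quasi-shuffles (with multiplicity): M_a M_b = sum over g in qsh a b of M_g *)
fun qsh :: "nat list \<Rightarrow> nat list \<Rightarrow> nat list list" where
  "qsh [] b = [b]"
| "qsh (x # a) [] = [x # a]"
| "qsh (x # a) (y # b) =
     map ((#) x) (qsh a (y # b)) @ map ((#) y) (qsh (x # a) b) @ map ((#) (x + y)) (qsh a b)"

definition qmult :: "(nat list \<Rightarrow> complex) \<Rightarrow> (nat list \<Rightarrow> complex) \<Rightarrow> nat list \<Rightarrow> complex" where
  "qmult f g = (\<lambda>c. \<Sum>a\<in>{a. f a \<noteq> 0}. \<Sum>b\<in>{b. g b \<noteq> 0}.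
        f a * g b * of_nat (count_list (qsh a b) c))"

(* coproduct: Delta(M_a) = sum_{b @ c = a} M_b \<otimes> M_c; an element of QSym \<otimes> QSym
   is represented by its coordinates in the basis M_b \<otimes> M_c *)
definition coprod :: "(nat list \<Rightarrow> complex) \<Rightarrow> (nat list \<times> nat list \<Rightarrow> complex)" where
  "coprod f = (\<lambda>(b, c). f (b @ c))"

definition counit :: "(nat list \<Rightarrow> complex) \<Rightarrow> complex" where
  "counit f = f []"

(* T \<otimes> T applied to an element of QSym \<otimes> QSym *)
definition tensor_map ::
  "((nat list \<Rightarrow> complex) \<Rightarrow> (nat list \<Rightarrow> complex)) \<Rightarrow> (nat list \<times> nat list \<Rightarrow> complex)
     \<Rightarrow> (nat list \<times> nat list \<Rightarrow> complex)" where
  "tensor_map T F = (\<lambda>(b', c'). \<Sum>p\<in>{p. F p \<noteq> 0}. F p * T (M (fst p)) b' * T (M (snd p)) c')"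

definition graded_hopf_morphism :: "((nat list \<Rightarrow> complex) \<Rightarrow> (nat list \<Rightarrow> complex)) \<Rightarrow> bool" where
  "graded_hopf_morphism T \<longleftrightarrow>
     (\<forall>f. qsym f \<longrightarrow> qsym (T f)) \<and>
     (\<forall>f g (x::complex) y. qsym f \<longrightarrow> qsym g \<longrightarrow>
        T (\<lambda>b. x * f b + y * g b) = (\<lambda>b. x * T f b + y * T g b)) \<and>
     (\<forall>a b. is_comp a \<longrightarrow> T (M a) b \<noteq> 0 \<longrightarrow> sum_list b = sum_list a) \<and>
     T (M []) = M [] \<and>
     (\<forall>f g. qsym f \<longrightarrow> qsym g \<longrightarrow> T (qmult f g) = qmult (T f) (T g)) \<and>
     (\<forall>f. qsym f \<longrightarrow> coprod (T f) = tensor_map T (coprod f)) \<and>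
     (\<forall>f. qsym f \<longrightarrow> counit (T f) = counit f)"

(* extension by linearity of a functional phi (phi a = value on M_a) *)
definition lin_ext :: "(nat list \<Rightarrow> complex) \<Rightarrow> (nat list \<Rightarrow> complex) \<Rightarrow> complex" where
  "lin_ext phi f = (\<Sum>b\<in>{b. f b \<noteq> 0}. f b * phi b)"

definition conv :: "(nat list \<Rightarrow> complex) \<Rightarrow> (nat list \<Rightarrow> complex) \<Rightarrow> nat list \<Rightarrow> complex" where
  "conv phi psi a = (\<Sum>i\<le>length a. phi (take i a) * psi (drop i a))"

definition eps :: "nat list \<Rightarrow> complex" where
  "eps a = (if a = [] then 1 else 0)"

definition cbar :: "(nat list \<Rightarrow> complex) \<Rightarrow> nat list \<Rightarrow> complex" where
  "cbar phi a = (-1) ^ sum_list a * phi a"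

(* M_a evaluated at a point x with x_i = 0 for i \<ge> N (variables indexed from 0) *)
definition M_eval :: "nat list \<Rightarrow> (nat \<Rightarrow> complex) \<Rightarrow> nat \<Rightarrow> complex" where
  "M_eval a x N = (\<Sum>I\<in>{I. I \<subseteq> {..<N} \<and> card I = length a}.
       \<Prod>j<length a. x (sorted_list_of_set I ! j) ^ (a ! j))"

definition zetaQ :: "nat list \<Rightarrow> complex" where
  "zetaQ a = M_eval a (\<lambda>i. if i = 0 then 1 else 0) 1"

definition zeta_inv :: "nat list \<Rightarrow> complex" where
  "zeta_inv = (THE chi. (\<forall>a. \<not> is_comp a \<longrightarrow> chi a = 0) \<and>
       (\<forall>a. is_comp a \<longrightarrow> conv chi zetaQ a = eps a \<and> conv zetaQ chi a = eps a))"

definition is_Theta :: "((nat list \<Rightarrow> complex) \<Rightarrow> (nat list \<Rightarrow> complex)) \<Rightarrow> bool" where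
  "is_Theta T \<longleftrightarrow> graded_hopf_morphism T \<and>
     (\<forall>a. is_comp a \<longrightarrow> lin_ext zetaQ (T (M a)) = conv (cbar zeta_inv) zetaQ a)"

(* OtE(a), positions 1-indexed: a_i odd and a_{i+1} even *)
definition OtE :: "nat list \<Rightarrow> nat set" where
  "OtE a = {i. 0 < i \<and> i < length a \<and> odd (a ! (i - 1)) \<and> even (a ! i)}"

(* coarsening of a obtained by cutting after the (sorted) positions ks *)
definition block_sums :: "nat list \<Rightarrow> nat list \<Rightarrow> nat list" where
  "block_sums a ks = (let bs = 0 # ks @ [length a] in
     map (\<lambda>i. sum_list (take (bs ! (i + 1) - bs ! i) (drop (bs ! i) a))) [0..<length ks + 1])"

definition m_o :: "nat list \<Rightarrow> nat list" where
  "m_o a = (if a = [] then [] else block_sums a (sorted_list_of_set (OtE a)))"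

(* number of odd / even parts of a in the block of a forming the i-th part (0-indexed) of b *)
definition blockO :: "nat list \<Rightarrow> nat list \<Rightarrow> nat \<Rightarrow> nat" where
  "blockO a b i = card {j. j < length a \<and> odd (a ! j) \<and>
       psum b i \<le> psum a j \<and> psum a (Suc j) \<le> psum b (Suc i)}"

definition blockE :: "nat list \<Rightarrow> nat list \<Rightarrow> nat \<Rightarrow> nat" where
  "blockE a b i = card {j. j < length a \<and> even (a ! j) \<and>
       psum b i \<le> psum a j \<and> psum a (Suc j) \<le> psum b (Suc i)}"

definition coeff_c :: "nat list \<Rightarrow> nat list \<Rightarrow> complex" where
  "coeff_c a b = (\<Prod>i<length b. 1 / (of_nat (fact (blockO a b i)) * of_nat (fact (blockE a b i))))"

definition S :: "nat list \<Rightarrow> nat list \<Rightarrow> complex" where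
  "S a = (\<lambda>b. if comp_le (m_o a) b \<and> comp_le b a then coeff_c a b else 0)"

end

theory Submission
  imports Defs
begin

text \<open>
  A graded Hopf endomorphism \<open>\<Theta>\<close> is determined by the character \<open>\<zeta> \<circ> \<Theta> = (bar \<zeta>\<^sup>-\<^sup>1) \<zeta>\<close>:
  iterating the coproduct, the coefficient of \<open>M\<^sub>b\<close> in \<open>\<Theta>(M\<^sub>c)\<close> is a sum over the cuttings of
  \<open>c\<close> into consecutive blocks with sums \<open>b\<^sub>1, b\<^sub>2, \<dots>\<close>, each block \<open>d\<close> contributing the
  factor \<open>\<zeta>(\<Theta>(M\<^sub>d))\<close>, which is \<open>2 (-1)\<^bsup>|d| + \<ell>(d)\<^esup>\<close> if the last part of \<open>d\<close> is odd and \<open>0\<close>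
  otherwise.

  The coarsenings \<open>\<beta> \<le> \<alpha>\<close> are the lists of block sums of the splittings of \<open>\<alpha>\<close> into
  consecutive blocks, and \<open>S\<^sub>\<alpha>\<close> is the sum over these splittings \<open>P\<close> of \<open>\<Prod>\<^sub>B\<^sub>\<in>\<^sub>P u(B)\<close> times
  the monomial of the block sums of \<open>P\<close>. Here \<open>u(B) = 1 / (O(B)! E(B)!)\<close> if no odd part of \<open>B\<close>
  is immediately followed by an even one, and \<open>u(B) = 0\<close> otherwise: the condition
  \<open>m\<^sub>o(\<alpha>) \<le> \<beta>\<close> says precisely that every such pair of \<open>\<alpha>\<close> is cut.
  Hence \<open>\<Theta>(S\<^sub>\<alpha>)\<close> is again a sum over splittings of \<open>\<alpha>\<close>, each block \<open>G\<close> now weighted by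
  \<open>\<zeta>(\<Theta>(S\<^sub>G))\<close>.

  The heart of the proof is the evaluation \<open>\<zeta>(\<Theta>(S\<^sub>G)) = 2\<^bsup>\<ell>(G)\<^esup> / \<ell>(G)!\<close> if all parts of \<open>G\<close>
  are odd, and \<open>0\<close> otherwise. Its signs only depend on parities, so it becomes a signed sum over
  the splittings of \<open>G\<close>; removing the last block gives a recursion whose solution is
  \<open>(-1)\<^bsup>E(G)\<^esup> / (O(G)! E(G)!)\<close> when \<open>G\<close> is odd parts followed by even parts, and \<open>0\<close> otherwise,
  by alternating binomial sums. As \<open>u(G) = 1 / \<ell>(G)!\<close> for all-odd \<open>G\<close>, induction on the length
  of \<open>b\<close> gives \<open>\<Theta>(S\<^sub>\<alpha>) = 2\<^bsup>\<ell>(\<alpha>)\<^esup> S\<^sub>\<alpha>\<close> when all parts of \<open>\<alpha>\<close> are odd and \<open>\<Theta>(S\<^sub>\<alpha>) = 0\<close>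
  otherwise.
\<close>

section \<open>Compositions, partial sums and descents\<close>

lemma is_comp_Nil [simp]: "is_comp []"
  by (simp add: is_comp_def)

lemma is_comp_append [simp]: "is_comp (a @ b) \<longleftrightarrow> is_comp a \<and> is_comp b"
  by (auto simp: is_comp_def)

lemma is_comp_Cons [simp]: "is_comp (x # a) \<longleftrightarrow> 0 < x \<and> is_comp a"
  by (auto simp: is_comp_def)

lemma is_comp_take: "is_comp a \<Longrightarrow> is_comp (take k a)"
  by (auto simp: is_comp_def dest: in_set_takeD)

lemma is_comp_drop: "is_comp a \<Longrightarrow> is_comp (drop k a)"
  by (auto simp: is_comp_def dest: in_set_dropD)

lemma is_comp_sum_list_pos: "is_comp a \<Longrightarrow> a \<noteq> [] \<Longrightarrow> 0 < sum_list a"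
  by (cases a) auto

lemma psum_0 [simp]: "psum a 0 = 0"
  by (simp add: psum_def)

lemma psum_length: "length a \<le> k \<Longrightarrow> psum a k = sum_list a"
  by (simp add: psum_def)

lemma psum_append: "psum (a @ b) i = psum a i + psum b (i - length a)"
  by (simp add: psum_def)

lemma psum_append_length_plus: "psum (a @ b) (length a + j) = sum_list a + psum b j"
  by (simp add: psum_append psum_length)

lemma psum_append_length: "psum (a @ b) (length a) = sum_list a"
  using psum_append_length_plus[of a b 0] by simp

lemma psum_Cons_Suc: "psum (x # a) (Suc i) = x + psum a i"
  by (simp add: psum_def)

lemma psum_add: "psum a (i + j) = psum a i + psum (drop i a) j"
  by (simp add: psum_def take_add)

lemma psum_mono: "i \<le> j \<Longrightarrow> psum a i \<le> psum a j"
  using psum_add[of a i "j - i"] by simp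

lemma psum_strict_mono:
  assumes "is_comp a" "i < j" "j \<le> length a"
  shows "psum a i < psum a j"
proof -
  have "0 < psum (drop i a) (j - i)"
    unfolding psum_def using assms by (intro is_comp_sum_list_pos is_comp_take is_comp_drop) auto
  then show ?thesis
    using psum_add[of a i "j - i"] assms(2) by simp
qed

lemma psum_le_iff:
  "is_comp a \<Longrightarrow> i \<le> length a \<Longrightarrow> j \<le> length a \<Longrightarrow> psum a i \<le> psum a j \<longleftrightarrow> i \<le> j"
  by (meson linorder_not_le psum_mono psum_strict_mono)

lemma psum_eq_iff:
  "is_comp a \<Longrightarrow> i \<le> length a \<Longrightarrow> j \<le> length a \<Longrightarrow> psum a i = psum a j \<longleftrightarrow> i = j"
  using psum_le_iff[of a i j] psum_le_iff[of a j i] by auto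

lemma psum_Suc_nth: "i < length a \<Longrightarrow> psum a (Suc i) = psum a i + a ! i"
  by (simp add: psum_def take_Suc_conv_app_nth)

lemma is_comp_iff_psum_less: "is_comp a \<longleftrightarrow> (\<forall>i<length a. psum a i < psum a (Suc i))"
  by (auto simp: is_comp_def psum_Suc_nth in_set_conv_nth)

lemma sum_list_take_drop_eq_psum_diff:
  "i \<le> j \<Longrightarrow> sum_list (take (j - i) (drop i a)) = psum a j - psum a i"
  using psum_add[of a i "j - i"] by (simp add: psum_def)

lemma descents_conv_image: "descents a = psum a ` {0<..<length a}"
  by (auto simp: descents_def)

lemma descents_Cons:
  "descents (x # a) = (if a = [] then {} else insert x ((+) x ` descents a))"
proof (cases "a = []")
  case False
  have "{0<..<length (x # a)} = Suc ` {..<length a}"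
    by (auto simp: image_iff gr0_conv_Suc)
  moreover have "{..<length a} = insert 0 {0<..<length a}"
    using False by auto
  ultimately show ?thesis
    using False by (simp add: descents_conv_image image_image psum_Cons_Suc)
qed (simp add: descents_def)

lemma descents_singleton [simp]: "descents [x] = {}"
  by (simp add: descents_Cons)

lemma descents_append:
  assumes "a \<noteq> []" "b \<noteq> []"
  shows "descents (a @ b) = descents a \<union> {sum_list a} \<union> (+) (sum_list a) ` descents b"
proof -
  have "i \<in> (+) (length a) ` {0<..<length b}" if "length a < i" "i < length a + length b" for i
    using that by (intro image_eqI[of _ _ "i - length a"]) auto
  then have "{0<..<length (a @ b)} = {0<..<length a} \<union> {length a} \<union> (+) (length a) ` {0<..<length b}"
    using assms by (auto simp: nat_neq_iff)
  moreover have "psum (a @ b) ` {0<..<length a} = psum a ` {0<..<length a}"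
    by (intro image_cong) (simp_all add: psum_append)
  ultimately show ?thesis
    by (simp add: descents_conv_image image_Un image_image psum_append_length_plus
        psum_append_length del: length_append)
qed

lemma descents_less_sum_list: "is_comp a \<Longrightarrow> d \<in> descents a \<Longrightarrow> d < sum_list a"
  unfolding descents_def using psum_strict_mono[of a _ "length a"] psum_length[of a "length a"] by auto

lemma descents_pos: "is_comp a \<Longrightarrow> d \<in> descents a \<Longrightarrow> 0 < d"
  unfolding descents_def using psum_strict_mono[of a 0] by fastforce

section \<open>Splittings of a list into consecutive blocks\<close>

definition splittings :: "'a list \<Rightarrow> 'a list list set" where
  "splittings a = {P. concat P = a \<and> [] \<notin> set P}"

lemma length_le_length_concat: "[] \<notin> set P \<Longrightarrow> length P \<le> length (concat P)"
proof (induction P)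
  case (Cons B P)
  then have "1 \<le> length B"
    by (cases B) auto
  with Cons show ?case
    by simp
qed simp

lemma finite_splittings: "finite (splittings a)"
proof -
  let ?blocks = "{B. set B \<subseteq> set a \<and> length B \<le> length a}"
  have "splittings a \<subseteq> {P. set P \<subseteq> ?blocks \<and> length P \<le> length a}"
  proof
    fix P assume "P \<in> splittings a"
    then have "concat P = a" "[] \<notin> set P"
      by (auto simp: splittings_def)
    then show "P \<in> {P. set P \<subseteq> ?blocks \<and> length P \<le> length a}"
      using length_le_length_concat[of P] by (auto simp: length_concat intro!: member_le_sum_list)
  qed
  moreover have "finite {P. set P \<subseteq> ?blocks \<and> length P \<le> length a}"
    by (intro finite_lists_length_le finite_lists_length_le) simp
  ultimately show ?thesis
    by (rule finite_subset)
qed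

lemma Nil_in_splittings_iff: "[] \<in> splittings a \<longleftrightarrow> a = []"
  by (auto simp: splittings_def)

lemma splittings_Nil [simp]: "splittings [] = {[]}"
proof -
  have "P = []" if "concat P = []" "[] \<notin> set P" for P :: "'a list list"
    using that by (cases P) auto
  then show ?thesis
    by (auto simp: splittings_def)
qed

lemma Cons_in_splittings_iff:
  "B # P \<in> splittings a \<longleftrightarrow> B \<noteq> [] \<and> a = B @ concat P \<and> P \<in> splittings (concat P)"
  by (auto simp: splittings_def)

lemma sum_splittings_first_block:
  "(\<Sum>P\<in>splittings a - {[]}. h P) =
   (\<Sum>m\<in>{1..length a}. \<Sum>P\<in>splittings (drop m a). h (take m a # P))"
proof -
  have "(\<Sum>P\<in>splittings a - {[]}. h P) =
        (\<Sum>(m, P)\<in>Sigma {1..length a} (\<lambda>m. splittings (drop m a)). h (take m a # P))"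
  proof (rule sum.reindex_bij_witness[where i = "\<lambda>(m, P). take m a # P" and j = "\<lambda>P. (length (hd P), tl P)"])
    fix P assume "P \<in> splittings a - {[]}"
    then obtain B P' where "P = B # P'" "B \<noteq> []" "a = B @ concat P'" "[] \<notin> set P'"
      by (cases P) (auto simp: splittings_def)
    then show "(case (length (hd P), tl P) of (m, P) \<Rightarrow> take m a # P) = P"
      and "(length (hd P), tl P) \<in> Sigma {1..length a} (\<lambda>m. splittings (drop m a))"
      and "(case (length (hd P), tl P) of (m, P) \<Rightarrow> h (take m a # P)) = h P"
      by (auto simp: splittings_def Suc_le_eq)
  qed (auto simp: splittings_def)
  also have "\<dots> = (\<Sum>m\<in>{1..length a}. \<Sum>P\<in>splittings (drop m a). h (take m a # P))"
    by (rule sum.Sigma[symmetric]) (auto simp: finite_splittings)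
  finally show ?thesis .
qed

lemma sum_splittings_last_block:
  "(\<Sum>P\<in>splittings a - {[]}. h P) =
   (\<Sum>m<length a. \<Sum>P\<in>splittings (take m a). h (P @ [drop m a]))"
proof -
  have "(\<Sum>P\<in>splittings a - {[]}. h P) =
        (\<Sum>(m, P)\<in>Sigma {..<length a} (\<lambda>m. splittings (take m a)). h (P @ [drop m a]))"
  proof (rule sum.reindex_bij_witness[where i = "\<lambda>(m, P). P @ [drop m a]"
        and j = "\<lambda>P. (length (concat (butlast P)), butlast P)"])
    fix P assume "P \<in> splittings a - {[]}"
    then obtain B P' where "P = P' @ [B]" "B \<noteq> []" "a = concat P' @ B" "[] \<notin> set P'"
      by (cases P rule: rev_cases) (auto simp: splittings_def)
    then show "(case (length (concat (butlast P)), butlast P) of (m, P) \<Rightarrow> P @ [drop m a]) = P"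
      and "(length (concat (butlast P)), butlast P) \<in> Sigma {..<length a} (\<lambda>m. splittings (take m a))"
      and "(case (length (concat (butlast P)), butlast P) of (m, P) \<Rightarrow> h (P @ [drop m a])) = h P"
      by (auto simp: splittings_def)
  qed (auto simp: splittings_def)
  also have "\<dots> = (\<Sum>m<length a. \<Sum>P\<in>splittings (take m a). h (P @ [drop m a]))"
    by (rule sum.Sigma[symmetric]) (auto simp: finite_splittings)
  finally show ?thesis .
qed

lemma bij_betw_cut_splitting:
  "bij_betw (\<lambda>(P, k). (length (concat (take k P)), take k P, drop k P))
     (SIGMA P:splittings a. {1..length P})
     (SIGMA m:{1..length a}. (splittings (take m a) - {[]}) \<times> splittings (drop m a))"
proof (rule bij_betw_byWitness[where f' = "\<lambda>(m, P1, P2). (P1 @ P2, length P1)"])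
  show "(\<lambda>(P, k). (length (concat (take k P)), take k P, drop k P)) ` (SIGMA P:splittings a. {1..length P})
      \<subseteq> (SIGMA m:{1..length a}. (splittings (take m a) - {[]}) \<times> splittings (drop m a))"
  proof (rule image_subsetI)
    fix x assume "x \<in> (SIGMA P:splittings a. {1..length P})"
    then obtain P k where x: "x = (P, k)" and P: "P \<in> splittings a" and k: "k \<in> {1..length P}"
      by blast
    have a: "a = concat (take k P) @ concat (drop k P)"
      using P by (simp add: splittings_def flip: concat_append)
    have "take k P \<noteq> []" "[] \<notin> set P"
      using P k by (auto simp: splittings_def)
    then have "concat (take k P) \<noteq> []"
      by (metis concat_eq_Nil_conv in_set_takeD list.set_sel(1))
    moreover have "take (length (concat (take k P))) a = concat (take k P)"
      and "drop (length (concat (take k P))) a = concat (drop k P)"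
      using a by (metis append_eq_conv_conj)+
    ultimately show "(\<lambda>(P, k). (length (concat (take k P)), take k P, drop k P)) x
        \<in> (SIGMA m:{1..length a}. (splittings (take m a) - {[]}) \<times> splittings (drop m a))"
      using x a \<open>take k P \<noteq> []\<close> \<open>[] \<notin> set P\<close>
      by (auto simp: splittings_def Suc_le_eq dest: in_set_takeD in_set_dropD)
  qed
qed (auto simp: splittings_def Suc_le_eq)

lemma sum_splittings_cut:
  "(\<Sum>P\<in>splittings a. \<Sum>k\<in>{1..length P}. h (take k P) (drop k P)) =
   (\<Sum>m\<in>{1..length a}. \<Sum>P1\<in>splittings (take m a) - {[]}. \<Sum>P2\<in>splittings (drop m a). h P1 P2)"
proof -
  have "(\<Sum>P\<in>splittings a. \<Sum>k\<in>{1..length P}. h (take k P) (drop k P)) =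
        (\<Sum>(P, k)\<in>(SIGMA P:splittings a. {1..length P}). h (take k P) (drop k P))"
    by (rule sum.Sigma) (auto simp: finite_splittings)
  also have "\<dots> = (\<Sum>(m, P1, P2)\<in>(SIGMA m:{1..length a}. (splittings (take m a) - {[]}) \<times> splittings (drop m a)).
                    h P1 P2)"
    using sum.reindex_bij_betw[OF bij_betw_cut_splitting, of "\<lambda>(m, P1, P2). h P1 P2"]
    by (simp add: case_prod_unfold)
  also have "\<dots> = (\<Sum>m\<in>{1..length a}. \<Sum>P1\<in>splittings (take m a) - {[]}. \<Sum>P2\<in>splittings (drop m a). h P1 P2)"
    by (subst sum.Sigma[symmetric]) (auto simp: finite_splittings sum.cartesian_product split_beta)
  finally show ?thesis .
qed

section \<open>Coarsenings of a composition are its block splittings\<close>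

lemma sum_list_concat: "sum_list (concat P) = sum_list (map sum_list P)"
  by (induction P) auto

lemma is_comp_map_sum_list:
  "is_comp a \<Longrightarrow> P \<in> splittings a \<Longrightarrow> is_comp (map sum_list P)"
  by (auto simp: splittings_def is_comp_def intro!: is_comp_sum_list_pos)

lemma descents_map_sum_list_subset:
  "is_comp a \<Longrightarrow> P \<in> splittings a \<Longrightarrow> descents (map sum_list P) \<subseteq> descents a"
proof (induction P arbitrary: a)
  case (Cons B P)
  then have a: "a = B @ concat P" "B \<noteq> []" "P \<in> splittings (concat P)"
    by (auto simp: Cons_in_splittings_iff)
  show ?case
  proof (cases "P = []")
    case False
    then have "concat P \<noteq> []"
      using a(3) by (cases P) (auto simp: splittings_def)
    moreover have "descents (map sum_list P) \<subseteq> descents (concat P)"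
      using Cons a by simp
    ultimately show ?thesis
      using False a by (auto simp: descents_Cons descents_append)
  qed simp
qed (simp add: descents_def)

lemma comp_le_map_sum_list:
  "is_comp a \<Longrightarrow> P \<in> splittings a \<Longrightarrow> comp_le (map sum_list P) a"
  unfolding comp_le_def
  by (auto simp: is_comp_map_sum_list descents_map_sum_list_subset splittings_def
      simp flip: sum_list_concat)

lemma comp_le_Cons_obtains_prefix:
  assumes "comp_le (y # b) a" "b \<noteq> []"
  obtains k where "0 < k" "k < length a" "sum_list (take k a) = y" "comp_le b (drop k a)"
proof -
  have yb: "is_comp a" "is_comp (y # b)" "y + sum_list b = sum_list a" "descents (y # b) \<subseteq> descents a"
    using assms(1) by (auto simp: comp_le_def)
  then have "y \<in> descents a"
    using assms(2) by (simp add: descents_Cons)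
  then obtain k where k: "y = psum a k" "0 < k" "k < length a"
    by (auto simp: descents_def)
  define B c where "B = take k a" and "c = drop k a"
  have a: "a = B @ c" "B \<noteq> []" "c \<noteq> []" "sum_list B = y" "is_comp B" "is_comp c"
    using k yb(1) by (auto simp: B_def c_def psum_def is_comp_take is_comp_drop)
  have "descents b \<subseteq> descents c"
  proof
    fix d assume d: "d \<in> descents b"
    then have "y + d \<in> descents B \<union> {y} \<union> (+) y ` descents c"
      using yb(4) assms(2) a by (auto simp: descents_Cons descents_append)
    moreover have "y + d \<notin> descents B"
      using a(4) by (auto dest: descents_less_sum_list[OF a(5)])
    moreover have "0 < d"
      using descents_pos[OF _ d] yb(2) by simp
    ultimately show "d \<in> descents c"
      by auto
  qed
  then have "comp_le b c"
    using yb a by (auto simp: comp_le_def)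
  then show ?thesis
    using that k a(4) by (simp add: B_def c_def)
qed

lemma comp_le_ex_splitting:
  "is_comp a \<Longrightarrow> comp_le b a \<Longrightarrow> \<exists>P\<in>splittings a. map sum_list P = b"
proof (induction b arbitrary: a)
  case Nil
  then have "a = []"
    by (cases a) (auto simp: comp_le_def)
  then show ?case
    by simp
next
  case (Cons y b)
  show ?case
  proof (cases "b = []")
    case True
    then have "a \<noteq> []" "sum_list a = y"
      using Cons.prems by (auto simp: comp_le_def)
    then show ?thesis
      using True by (intro bexI[of _ "[a]"]) (auto simp: splittings_def)
  next
    case False
    then obtain k where k: "0 < k" "k < length a" "sum_list (take k a) = y" "comp_le b (drop k a)"
      using comp_le_Cons_obtains_prefix[OF Cons.prems(2)] by blast
    then obtain P where "P \<in> splittings (drop k a)" "map sum_list P = b"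
      using Cons.IH is_comp_drop[OF Cons.prems(1)] by blast
    then show ?thesis
      using k by (intro bexI[of _ "take k a # P"]) (auto simp: splittings_def)
  qed
qed

lemma inj_on_map_sum_list_splittings:
  assumes "is_comp a"
  shows "inj_on (map sum_list) (splittings a)"
proof -
  have "P = Q" if "is_comp a" "P \<in> splittings a" "Q \<in> splittings a" "map sum_list P = map sum_list Q"
    for P Q a
    using that
  proof (induction P arbitrary: Q a)
    case (Cons B P)
    then obtain C Q' where Q: "Q = C # Q'"
      by (cases Q) auto
    have a: "a = B @ concat P" "a = C @ concat Q'" "P \<in> splittings (concat P)" "Q' \<in> splittings (concat Q')"
      using Cons.prems Q by (auto simp: Cons_in_splittings_iff)
    have "psum a (length B) = sum_list B" "psum a (length C) = sum_list C"
      using psum_append_length a(1,2) by metis+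
    moreover have "sum_list B = sum_list C"
      using Cons.prems(4) Q by simp
    moreover have "length B \<le> length a" "length C \<le> length a"
      using a(1,2) by (metis le_add1 length_append)+
    ultimately have "length B = length C"
      using psum_eq_iff[OF Cons.prems(1)] by metis
    then have "B = C" "concat P = concat Q'"
      using a by (metis append_eq_append_conv)+
    moreover have "is_comp (concat P)"
      using Cons.prems(1) a(1) by simp
    ultimately show ?case
      using Cons.IH[of "concat P" Q'] Cons.prems(4) a Q by auto
  qed (auto simp: splittings_def)
  then show ?thesis
    using assms by (auto simp: inj_on_def)
qed

lemma map_sum_list_splittings:
  "is_comp a \<Longrightarrow> map sum_list ` splittings a = {b. comp_le b a}"
  using comp_le_map_sum_list comp_le_ex_splitting by blast

section \<open>The shuffle function as a sum over block splittings\<close>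

lemma psum_block_sums:
  assumes cuts: "sorted_wrt (<) (0 # ks @ [length a])" and j: "j \<le> Suc (length ks)"
  shows "psum (block_sums a ks) j = psum a ((0 # ks @ [length a]) ! j)"
  using j
proof (induction j)
  case (Suc j)
  let ?bs = "0 # ks @ [length a]"
  have "?bs ! j < ?bs ! Suc j"
    using Suc.prems by (intro sorted_wrt_nth_less[OF cuts]) auto
  have "block_sums a ks ! j = sum_list (take (?bs ! Suc j - ?bs ! j) (drop (?bs ! j) a))"
    using Suc.prems by (simp add: block_sums_def Let_def del: upt_Suc nth_Cons_Suc)
  also have "\<dots> = psum a (?bs ! Suc j) - psum a (?bs ! j)"
    using \<open>?bs ! j < ?bs ! Suc j\<close> by (simp add: sum_list_take_drop_eq_psum_diff del: nth_Cons_Suc)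
  finally have "block_sums a ks ! j = psum a (?bs ! Suc j) - psum a (?bs ! j)" .
  moreover have "psum a (?bs ! j) \<le> psum a (?bs ! Suc j)"
    using \<open>?bs ! j < ?bs ! Suc j\<close> by (simp add: psum_mono)
  ultimately show ?case
    using Suc by (simp add: psum_Suc_nth block_sums_def Let_def del: upt_Suc nth_Cons_Suc)
qed (simp add: psum_def)

lemma block_sums_props:
  assumes a: "is_comp a" and cuts: "sorted_wrt (<) (0 # ks @ [length a])"
  shows "is_comp (block_sums a ks)" and "sum_list (block_sums a ks) = sum_list a"
    and "descents (block_sums a ks) = psum a ` set ks"
proof -
  let ?bs = "0 # ks @ [length a]"
  have length: "length (block_sums a ks) = Suc (length ks)"
    by (simp add: block_sums_def Let_def)
  have bounded: "\<forall>x\<in>set ?bs. x \<le> length a"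
    using cuts by (auto simp: sorted_wrt_append)
  show "is_comp (block_sums a ks)"
    unfolding is_comp_iff_psum_less length
  proof (intro allI impI)
    fix i assume i: "i < Suc (length ks)"
    have "?bs ! i < ?bs ! Suc i"
      by (rule sorted_wrt_nth_less[OF cuts]) (use i in simp_all)
    moreover have "?bs ! Suc i \<le> length a"
      using nth_mem[of "Suc i" ?bs] i bounded by auto
    ultimately have "psum a (?bs ! i) < psum a (?bs ! Suc i)"
      by (intro psum_strict_mono[OF a])
    then show "psum (block_sums a ks) i < psum (block_sums a ks) (Suc i)"
      using i by (simp add: psum_block_sums[OF cuts] del: nth_Cons_Suc)
  qed
  show "sum_list (block_sums a ks) = sum_list a"
    using psum_block_sums[OF cuts, of "Suc (length ks)"] length
    by (simp add: psum_length nth_append)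
  have "{0<..<Suc (length ks)} = Suc ` {..<length ks}"
    by (auto simp: image_iff gr0_conv_Suc)
  then have "(!) ?bs ` {0<..<Suc (length ks)} = set ks"
    by (auto simp: image_image nth_append in_set_conv_nth)
  moreover have "descents (block_sums a ks) = (\<lambda>j. psum a (?bs ! j)) ` {0<..<Suc (length ks)}"
    unfolding descents_conv_image length
    by (intro image_cong refl psum_block_sums[OF cuts]) simp
  ultimately show "descents (block_sums a ks) = psum a ` set ks"
    by (simp only: image_image[symmetric])
qed

lemma OtE_subset: "OtE a \<subseteq> {0<..<length a}"
  by (auto simp: OtE_def)

lemma m_o_props:
  assumes "is_comp a"
  shows "is_comp (m_o a)" and "sum_list (m_o a) = sum_list a"
    and "descents (m_o a) = psum a ` OtE a"
proof -
  have "finite (OtE a)"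
    using OtE_subset finite_subset by blast
  moreover have "sorted_wrt (<) (0 # sorted_list_of_set (OtE a) @ [length a])" if "a \<noteq> []"
    using that OtE_subset[of a] \<open>finite (OtE a)\<close> by (auto simp: sorted_wrt_append)
  ultimately show "is_comp (m_o a)" "sum_list (m_o a) = sum_list a"
    "descents (m_o a) = psum a ` OtE a"
    using block_sums_props[OF assms] by (auto simp: m_o_def OtE_def descents_def)
qed

lemma OtE_append_supset: "OtE b \<union> (+) (length b) ` OtE c \<subseteq> OtE (b @ c)"
  by (auto simp: OtE_def nth_append)

lemma OtE_append_subset: "OtE (b @ c) \<subseteq> insert (length b) (OtE b \<union> (+) (length b) ` OtE c)"
proof
  fix i assume i: "i \<in> OtE (b @ c)"
  show "i \<in> insert (length b) (OtE b \<union> (+) (length b) ` OtE c)"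
  proof (cases "length b < i")
    case True
    then have "i - length b \<in> OtE c"
      using i by (auto simp: OtE_def nth_append split: if_split_asm)
    then show ?thesis
      using True by (auto intro: image_eqI[of _ _ "i - length b"])
  qed (use i in \<open>auto simp: OtE_def nth_append split: if_split_asm\<close>)
qed

lemma psum_shifted_OtE_subset_iff:
  assumes "is_comp (b @ c)"
  shows "psum (b @ c) ` ((+) (length b) ` OtE c) \<subseteq> insert (sum_list b) ((+) (sum_list b) ` D)
    \<longleftrightarrow> psum c ` OtE c \<subseteq> D"
proof -
  have "0 < psum c j" if "j \<in> OtE c" for j
    using that psum_strict_mono[of c 0 j] assms by (auto simp: OtE_def)
  then have "0 \<notin> psum c ` OtE c"
    by (metis image_iff less_irrefl)
  moreover have "(+) s ` A \<subseteq> insert s ((+) s ` D) \<longleftrightarrow> A \<subseteq> D" if "0 \<notin> A" for s :: nat and A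
    using that by auto
  moreover have "psum (b @ c) ` ((+) (length b) ` OtE c) = (+) (sum_list b) ` psum c ` OtE c"
    by (simp add: image_image psum_append_length_plus)
  ultimately show ?thesis
    by simp
qed

text \<open>By \<open>descents_Cons\<close>, \<open>insert (sum_list b) ((+) (sum_list b) ` D)\<close> is the descent set
  of \<open>sum_list b # d\<close> when \<open>D\<close> is that of \<open>d\<close>.\<close>

lemma psum_OtE_append_subset_iff:
  assumes "is_comp (b @ c)"
  shows "psum (b @ c) ` OtE (b @ c) \<subseteq> insert (sum_list b) ((+) (sum_list b) ` D)
    \<longleftrightarrow> OtE b = {} \<and> psum c ` OtE c \<subseteq> D" (is "_ \<subseteq> ?R \<longleftrightarrow> _")
proof
  assume sub: "psum (b @ c) ` OtE (b @ c) \<subseteq> ?R"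
  have "OtE b = {}"
  proof (rule ccontr)
    assume "OtE b \<noteq> {}"
    then obtain i where i: "i \<in> OtE b"
      by blast
    then have "psum (b @ c) i \<in> ?R"
      using sub OtE_append_supset[of b c] by (meson UnI1 image_subset_iff subsetD)
    moreover have "psum (b @ c) i < sum_list b"
      using i psum_strict_mono[of b i "length b"] assms by (auto simp: OtE_def psum_append psum_length)
    ultimately show False
      by auto
  qed
  moreover have "psum (b @ c) ` ((+) (length b) ` OtE c) \<subseteq> ?R"
    using sub OtE_append_supset[of b c] by (meson image_mono le_supE order_trans)
  ultimately show "OtE b = {} \<and> psum c ` OtE c \<subseteq> D"
    using psum_shifted_OtE_subset_iff[OF assms] by simp
next
  assume *: "OtE b = {} \<and> psum c ` OtE c \<subseteq> D"
  then have "psum (b @ c) ` OtE (b @ c) \<subseteq> psum (b @ c) ` insert (length b) ((+) (length b) ` OtE c)"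
    using OtE_append_subset[of b c] by (intro image_mono) simp
  also have "\<dots> \<subseteq> ?R"
    using * psum_shifted_OtE_subset_iff[OF assms] by (simp add: psum_append_length)
  finally show "psum (b @ c) ` OtE (b @ c) \<subseteq> ?R" .
qed

lemma psum_OtE_subset_descents_iff:
  "is_comp a \<Longrightarrow> P \<in> splittings a \<Longrightarrow>
    psum a ` OtE a \<subseteq> descents (map sum_list P) \<longleftrightarrow> (\<forall>B\<in>set P. OtE B = {})"
proof (induction P arbitrary: a)
  case Nil
  then show ?case
    by (simp add: splittings_def OtE_def)
next
  case (Cons B P)
  then have a: "a = B @ concat P" "P \<in> splittings (concat P)" "is_comp (concat P)"
    by (auto simp: Cons_in_splittings_iff)
  show ?case
  proof (cases "P = []")
    case True
    then show ?thesis
      using a by simp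
  next
    case False
    then show ?thesis
      using Cons.prems(1) Cons.IH[OF a(3,2)] a(1)
      by (simp add: descents_Cons psum_OtE_append_subset_iff)
  qed
qed

lemma comp_le_m_o_iff:
  assumes "is_comp a" "P \<in> splittings a"
  shows "comp_le (m_o a) (map sum_list P) \<longleftrightarrow> (\<forall>B\<in>set P. OtE B = {})"
  using m_o_props[OF assms(1)] comp_le_map_sum_list[OF assms] psum_OtE_subset_descents_iff[OF assms]
  by (simp add: comp_le_def)

definition block_positions :: "(nat \<Rightarrow> bool) \<Rightarrow> nat list \<Rightarrow> nat list \<Rightarrow> nat \<Rightarrow> nat set" where
  "block_positions Q a b i = {j. j < length a \<and> Q (a ! j) \<and>
       psum b i \<le> psum a j \<and> psum a (Suc j) \<le> psum b (Suc i)}"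

lemma blockO_eq: "blockO a b i = card (block_positions odd a b i)"
  by (simp add: blockO_def block_positions_def)

lemma blockE_eq: "blockE a b i = card (block_positions even a b i)"
  by (simp add: blockE_def block_positions_def)

lemma block_positions_Cons_0:
  assumes "is_comp (B @ c)"
  shows "block_positions Q (B @ c) (sum_list B # b) 0 = {j. j < length B \<and> Q (B ! j)}"
proof -
  have "psum (B @ c) (Suc j) \<le> psum (B @ c) (length B) \<longleftrightarrow> Suc j \<le> length B" if "j < length (B @ c)" for j
    using that by (intro psum_le_iff[OF assms]) auto
  then show ?thesis
    by (auto simp: block_positions_def psum_Cons_Suc psum_append_length nth_append)
qed

lemma block_positions_Cons_Suc:
  assumes "is_comp (B @ c)"
  shows "block_positions Q (B @ c) (sum_list B # b) (Suc i) = (+) (length B) ` block_positions Q c b i"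
proof -
  have shifted: "psum (B @ c) (length B + j) = sum_list B + psum c j" for j
    by (rule psum_append_length_plus)
  have "j \<in> (+) (length B) ` block_positions Q c b i"
    if "j \<in> block_positions Q (B @ c) (sum_list B # b) (Suc i)" for j
  proof -
    have j: "j < length (B @ c)" "Q ((B @ c) ! j)" "sum_list B + psum b i \<le> psum (B @ c) j"
      "psum (B @ c) (Suc j) \<le> sum_list B + psum b (Suc i)"
      using that by (auto simp: block_positions_def psum_Cons_Suc)
    then have "length B \<le> j"
      using psum_le_iff[OF assms, of "length B" j] by (simp add: psum_append_length)
    then obtain k where "j = length B + k"
      using le_Suc_ex by blast
    with j show ?thesis
      by (auto simp: block_positions_def shifted simp flip: add_Suc_right)
  qed
  moreover have "(+) (length B) ` block_positions Q c b i \<subseteq> block_positions Q (B @ c) (sum_list B # b) (Suc i)"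
    by (auto simp: block_positions_def psum_Cons_Suc shifted simp flip: add_Suc_right)
  ultimately show ?thesis
    by blast
qed

abbreviation odd_count :: "nat list \<Rightarrow> nat" where
  "odd_count B \<equiv> length (filter odd B)"

abbreviation even_count :: "nat list \<Rightarrow> nat" where
  "even_count B \<equiv> length (filter even B)"

definition block_weight :: "nat list \<Rightarrow> complex" where
  "block_weight B = 1 / (fact (odd_count B) * fact (even_count B))"

definition shuffle_weight :: "nat list \<Rightarrow> complex" where
  "shuffle_weight B = (if OtE B = {} then block_weight B else 0)"

lemma coeff_c_map_sum_list:
  "is_comp a \<Longrightarrow> P \<in> splittings a \<Longrightarrow> coeff_c a (map sum_list P) = prod_list (map block_weight P)"
proof (induction P arbitrary: a)
  case (Cons B P)
  then have a: "a = B @ concat P" "P \<in> splittings (concat P)" "is_comp (concat P)"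
    by (auto simp: Cons_in_splittings_iff)
  have comp: "is_comp (B @ concat P)"
    using Cons.prems(1) a(1) by simp
  have "blockO a (map sum_list (B # P)) 0 = odd_count B"
    "blockE a (map sum_list (B # P)) 0 = even_count B"
    unfolding blockO_eq blockE_eq a(1) list.map block_positions_Cons_0[OF comp]
    by (simp_all add: length_filter_conv_card)
  moreover have "blockO a (map sum_list (B # P)) (Suc i) = blockO (concat P) (map sum_list P) i"
    "blockE a (map sum_list (B # P)) (Suc i) = blockE (concat P) (map sum_list P) i" for i
    unfolding blockO_eq blockE_eq a(1) list.map block_positions_Cons_Suc[OF comp]
    by (simp_all add: card_image)
  ultimately have "coeff_c a (map sum_list (B # P)) = block_weight B * coeff_c (concat P) (map sum_list P)"
    by (simp only: coeff_c_def length_map length_Cons prod.lessThan_Suc_shift) (simp add: block_weight_def)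
  then show ?case
    using Cons.IH[OF a(3,2)] by simp
qed (simp add: coeff_c_def)

lemma prod_list_shuffle_weight:
  "prod_list (map shuffle_weight P) = (if \<forall>B\<in>set P. OtE B = {} then prod_list (map block_weight P) else 0)"
  by (induction P) (auto simp: shuffle_weight_def)

lemma S_map_sum_list:
  assumes "is_comp a" "P \<in> splittings a"
  shows "S a (map sum_list P) = prod_list (map shuffle_weight P)"
  using comp_le_map_sum_list[OF assms] comp_le_m_o_iff[OF assms] coeff_c_map_sum_list[OF assms]
  by (simp add: S_def prod_list_shuffle_weight)

lemma S_eq_sum_splittings:
  assumes "is_comp a"
  shows "S a b = (\<Sum>P\<in>splittings a. if map sum_list P = b then prod_list (map shuffle_weight P) else 0)"
proof -
  have "(\<Sum>P\<in>splittings a. if map sum_list P = b then prod_list (map shuffle_weight P) else 0)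
      = (\<Sum>P\<in>splittings a. (\<lambda>c. if c = b then S a c else 0) (map sum_list P))"
    using S_map_sum_list[OF assms] by (intro sum.cong) auto
  also have "\<dots> = (\<Sum>c\<in>{c. comp_le c a}. if c = b then S a c else 0)"
    using sum.reindex[OF inj_on_map_sum_list_splittings[OF assms], of "\<lambda>c. if c = b then S a c else 0"]
    by (simp add: map_sum_list_splittings[OF assms] comp_def)
  also have "\<dots> = (if comp_le b a then S a b else 0)"
    using finite_imageI[OF finite_splittings, of "map sum_list" a]
    by (simp add: sum.delta' map_sum_list_splittings[OF assms])
  also have "\<dots> = S a b"
    by (simp add: S_def)
  finally show ?thesis ..
qed

lemma S_Cons:
  assumes "is_comp a"
  shows "S a (x # b) = (\<Sum>m\<in>{1..length a}.
    if sum_list (take m a) = x then shuffle_weight (take m a) * S (drop m a) b else 0)"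
proof -
  have "S a (x # b) = (\<Sum>P\<in>splittings a - {[]}.
      if map sum_list P = x # b then prod_list (map shuffle_weight P) else 0)"
    unfolding S_eq_sum_splittings[OF assms] by (rule sum.mono_neutral_right) (auto simp: finite_splittings)
  also have "\<dots> = (\<Sum>m\<in>{1..length a}. \<Sum>P\<in>splittings (drop m a).
      if sum_list (take m a) = x \<and> map sum_list P = b
      then shuffle_weight (take m a) * prod_list (map shuffle_weight P) else 0)"
    by (simp add: sum_splittings_first_block cong: if_cong)
  also have "\<dots> = (\<Sum>m\<in>{1..length a}.
      if sum_list (take m a) = x then shuffle_weight (take m a) * S (drop m a) b else 0)"
    using assms by (intro sum.cong refl)
      (auto simp: S_eq_sum_splittings is_comp_drop sum_distrib_left intro!: sum.cong)
  finally show ?thesis .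
qed

lemma S_Nil: "is_comp a \<Longrightarrow> S a [] = (if a = [] then 1 else 0)"
  by (auto simp: S_eq_sum_splittings Nil_in_splittings_iff finite_splittings sum.delta' cong: if_cong)

section \<open>The character \<open>\<zeta> \<circ> \<Theta>\<close> on monomials\<close>

lemma zetaQ_eq: "zetaQ a = (if length a \<le> 1 then 1 else 0)"
proof -
  have "{I. I \<subseteq> {..<1::nat} \<and> card I = k} = (if k = 0 then {{}} else if k = 1 then {{0}} else {})" for k
    by (auto simp: subset_singleton_iff lessThan_Suc)
  then show ?thesis
    by (auto simp: zetaQ_def M_eval_def le_Suc_eq)
qed

lemma conv_zetaQ_right: "conv \<psi> zetaQ a = \<psi> a + (if a = [] then 0 else \<psi> (butlast a))"
proof (cases a rule: rev_cases)
  case (snoc b x)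
  have "conv \<psi> zetaQ a = (\<Sum>i\<in>{length b, Suc (length b)}. \<psi> (take i a) * zetaQ (drop i a))"
    unfolding conv_def by (rule sum.mono_neutral_right) (auto simp: snoc zetaQ_eq)
  then show ?thesis
    by (simp add: snoc zetaQ_eq)
qed (simp add: conv_def zetaQ_eq)

lemma conv_zetaQ_left: "conv zetaQ \<psi> a = \<psi> a + (if a = [] then 0 else \<psi> (tl a))"
proof (cases a)
  case (Cons x b)
  have "conv zetaQ \<psi> a = (\<Sum>i\<in>{0, 1}. zetaQ (take i a) * \<psi> (drop i a))"
    unfolding conv_def by (rule sum.mono_neutral_right) (auto simp: Cons zetaQ_eq)
  then show ?thesis
    by (simp add: Cons zetaQ_eq)
qed (simp add: conv_def zetaQ_eq)

lemma zeta_inv_eq: "zeta_inv = (\<lambda>a. if is_comp a then (-1) ^ length a else 0)"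
  unfolding zeta_inv_def
proof (rule the_equality)
  let ?\<chi> = "\<lambda>a. if is_comp a then (-1) ^ length a else 0 :: complex"
  show "(\<forall>a. \<not> is_comp a \<longrightarrow> ?\<chi> a = 0) \<and>
        (\<forall>a. is_comp a \<longrightarrow> conv ?\<chi> zetaQ a = eps a \<and> conv zetaQ ?\<chi> a = eps a)"
  proof (intro conjI allI impI)
    fix a :: "nat list" assume "is_comp a"
    then show "conv ?\<chi> zetaQ a = eps a"
      by (cases a rule: rev_cases) (simp_all add: conv_zetaQ_right eps_def)
    show "conv zetaQ ?\<chi> a = eps a"
      using \<open>is_comp a\<close> by (cases a) (simp_all add: conv_zetaQ_left eps_def)
  qed simp
next
  fix \<chi> :: "nat list \<Rightarrow> complex"
  assume \<chi>: "(\<forall>a. \<not> is_comp a \<longrightarrow> \<chi> a = 0) \<and>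
        (\<forall>a. is_comp a \<longrightarrow> conv \<chi> zetaQ a = eps a \<and> conv zetaQ \<chi> a = eps a)"
  show "\<chi> = (\<lambda>a. if is_comp a then (-1) ^ length a else 0)"
  proof
    fix a show "\<chi> a = (if is_comp a then (-1) ^ length a else 0)"
    proof (induction a rule: rev_induct)
      case (snoc x b)
      then show ?case
        using \<chi> conv_zetaQ_right[of \<chi> "b @ [x]"] by (auto simp: eps_def eq_neg_iff_add_eq_0)
    qed (use \<chi> conv_zetaQ_right[of \<chi> "[]"] in \<open>simp add: eps_def\<close>)
  qed
qed

text \<open>The value of \<open>\<zeta> \<circ> \<Theta> = (bar \<zeta>\<^sup>-\<^sup>1) \<zeta>\<close> on \<open>M\<^sub>c\<close>, for nonempty \<open>c\<close>.\<close>

definition phi :: "nat list \<Rightarrow> complex" where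
  "phi c = (if odd (last c) then 2 * (-1) ^ (sum_list c + length c) else 0)"

lemma conv_cbar_zeta_inv_zetaQ:
  assumes "is_comp c" "c \<noteq> []"
  shows "conv (cbar zeta_inv) zetaQ c = phi c"
proof -
  obtain b x where c: "c = b @ [x]"
    using assms(2) by (cases c rule: rev_cases) auto
  have "conv (cbar zeta_inv) zetaQ c = (-1) ^ (sum_list b + length b) * (1 - (-1) ^ x)"
    using assms c by (simp add: conv_zetaQ_right cbar_def zeta_inv_eq power_add algebra_simps)
  then show ?thesis
    using c by (simp add: phi_def power_add)
qed

section \<open>\<open>\<Theta>\<close> on the monomial basis\<close>

lemma is_ThetaD:
  assumes "is_Theta T"
  shows "qsym f \<Longrightarrow> qsym (T f)"
    and "qsym f \<Longrightarrow> qsym g \<Longrightarrow> T (\<lambda>b. x * f b + y * g b) = (\<lambda>b. x * T f b + y * T g b)"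
    and "is_comp a \<Longrightarrow> T (M a) b \<noteq> 0 \<Longrightarrow> sum_list b = sum_list a"
    and "T (M []) = M []"
    and "qsym f \<Longrightarrow> coprod (T f) = tensor_map T (coprod f)"
    and "qsym f \<Longrightarrow> counit (T f) = counit f"
    and "is_comp a \<Longrightarrow> lin_ext zetaQ (T (M a)) = conv (cbar zeta_inv) zetaQ a"
  using assms unfolding is_Theta_def graded_hopf_morphism_def by blast+

lemma qsym_M: "is_comp a \<Longrightarrow> qsym (M a)"
  by (simp add: qsym_def M_def)

lemma qsym_sum_M:
  assumes "finite A" "\<forall>c\<in>A. is_comp c"
  shows "qsym (\<lambda>b. \<Sum>c\<in>A. f c * M c b)"
proof -
  have "(\<Sum>c\<in>A. f c * M c b) = 0" if "b \<notin> A" for b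
    using that by (intro sum.neutral) (auto simp: M_def)
  then have "{b. (\<Sum>c\<in>A. f c * M c b) \<noteq> 0} \<subseteq> A"
    by blast
  then show ?thesis
    using assms by (auto simp: qsym_def intro: finite_subset)
qed

lemma Theta_sum_M:
  assumes "is_Theta T"
  shows "finite A \<Longrightarrow> \<forall>c\<in>A. is_comp c \<Longrightarrow>
    T (\<lambda>b. \<Sum>c\<in>A. f c * M c b) = (\<lambda>b. \<Sum>c\<in>A. f c * T (M c) b)"
proof (induction A rule: finite_induct)
  case empty
  show ?case
    using is_ThetaD(2)[OF assms qsym_M qsym_M, of "[]" "[]" 0 0] by simp
next
  case (insert c A)
  have "T (\<lambda>b. \<Sum>c\<in>insert c A. f c * M c b) = T (\<lambda>b. 1 * (\<Sum>c\<in>A. f c * M c b) + f c * M c b)"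
    using insert.hyps by (simp add: add.commute)
  also have "\<dots> = (\<lambda>b. 1 * T (\<lambda>b. \<Sum>c\<in>A. f c * M c b) b + f c * T (M c) b)"
    using insert.prems by (intro is_ThetaD(2)[OF assms] qsym_sum_M qsym_M insert.hyps(1)) auto
  also have "\<dots> = (\<lambda>b. \<Sum>c\<in>insert c A. f c * T (M c) b)"
    using insert by (simp add: add.commute)
  finally show ?case .
qed

lemma Theta_M_Nil:
  assumes "is_Theta T" "is_comp c"
  shows "T (M c) [] = (if c = [] then 1 else 0)"
  using is_ThetaD(6)[OF assms(1) qsym_M[OF assms(2)]] by (simp add: counit_def M_def)

lemma Theta_M_singleton:
  assumes T: "is_Theta T" and c: "is_comp c" "c \<noteq> []"
  shows "T (M c) [x] = (if x = sum_list c then phi c else 0)"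
proof -
  let ?F = "T (M c)"
  have degree: "?F b \<noteq> 0 \<Longrightarrow> sum_list b = sum_list c" for b
    by (rule is_ThetaD(3)[OF T c(1)])
  have "finite {b. ?F b \<noteq> 0}"
    using is_ThetaD(1)[OF T qsym_M[OF c(1)]] by (simp add: qsym_def)
  have "phi c = (\<Sum>b\<in>{b. ?F b \<noteq> 0}. ?F b * zetaQ b)"
    using is_ThetaD(7)[OF T c(1)] conv_cbar_zeta_inv_zetaQ[OF c] by (simp add: lin_ext_def)
  also have "\<dots> = (\<Sum>b\<in>{b. ?F b \<noteq> 0}. if b = [sum_list c] then ?F b else 0)"
  proof (intro sum.cong refl)
    fix b assume "b \<in> {b. ?F b \<noteq> 0}"
    then have "sum_list b = sum_list c"
      by (simp add: degree)
    moreover have "sum_list c \<noteq> 0"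
      using is_comp_sum_list_pos[OF c] by linarith
    ultimately show "?F b * zetaQ b = (if b = [sum_list c] then ?F b else 0)"
      by (cases b) (auto simp: zetaQ_eq)
  qed
  also have "\<dots> = ?F [sum_list c]"
    using \<open>finite {b. ?F b \<noteq> 0}\<close> by (simp add: sum.delta')
  finally show ?thesis
    using degree[of "[x]"] by auto
qed

lemma sum_pairs_append_eq:
  "(\<Sum>p\<in>{p. fst p @ snd p = c}. h p) = (\<Sum>k\<le>length c. h (take k c, drop k c))"
  by (rule sum.reindex_bij_witness[where j = "\<lambda>p. length (fst p)" and i = "\<lambda>k. (take k c, drop k c)"])
    (auto simp: append_eq_conv_conj min_def dest: arg_cong[where f = length] split: if_splits)

text \<open>\<open>theta_mono c b\<close> is the coefficient of \<open>M\<^sub>b\<close> in \<open>\<Theta>(M\<^sub>c)\<close>: comultiplicativity splits off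
  the first part of \<open>b\<close>, and the character \<open>\<zeta> \<circ> \<Theta>\<close> evaluates the corresponding prefix of \<open>c\<close>.\<close>

fun theta_mono :: "nat list \<Rightarrow> nat list \<Rightarrow> complex" where
  "theta_mono c [] = (if c = [] then 1 else 0)"
| "theta_mono c (x # b) = (\<Sum>k\<in>{1..length c}.
     (if sum_list (take k c) = x then phi (take k c) else 0) * theta_mono (drop k c) b)"

lemma Theta_M_eq_theta_mono:
  assumes T: "is_Theta T"
  shows "is_comp c \<Longrightarrow> T (M c) b = theta_mono c b"
proof (induction b arbitrary: c)
  case Nil
  then show ?case
    using Theta_M_Nil[OF T] by simp
next
  case (Cons x b)
  have "T (M c) (x # b) = tensor_map T (coprod (M c)) ([x], b)"
    using fun_cong[OF is_ThetaD(5)[OF T qsym_M[OF Cons.prems]], of "([x], b)"] by (simp add: coprod_def)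
  also have "\<dots> = (\<Sum>p\<in>{p. fst p @ snd p = c}. T (M (fst p)) [x] * T (M (snd p)) b)"
    by (simp add: tensor_map_def coprod_def M_def case_prod_beta)
  also have "\<dots> = (\<Sum>k\<le>length c. T (M (take k c)) [x] * T (M (drop k c)) b)"
    using sum_pairs_append_eq[of "\<lambda>p. T (M (fst p)) [x] * T (M (snd p)) b" c] by simp
  also have "\<dots> = (\<Sum>k\<in>{1..length c}. T (M (take k c)) [x] * T (M (drop k c)) b)"
    using is_ThetaD(4)[OF T] by (intro sum.mono_neutral_right) (auto simp: M_def Suc_le_eq)
  also have "\<dots> = theta_mono c (x # b)"
    unfolding theta_mono.simps
  proof (intro sum.cong refl)
    fix k assume "k \<in> {1..length c}"
    then have "take k c \<noteq> []" "is_comp (take k c)" "is_comp (drop k c)"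
      using Cons.prems by (auto simp: is_comp_take is_comp_drop)
    then show "T (M (take k c)) [x] * T (M (drop k c)) b =
        (if sum_list (take k c) = x then phi (take k c) else 0) * theta_mono (drop k c) b"
      using Theta_M_singleton[OF T] Cons.IH by auto
  qed
  finally show ?case .
qed

section \<open>The value of \<open>\<zeta> \<circ> \<Theta>\<close> on shuffle functions\<close>

lemma sum_alternating_inverse_fact_products:
  "1 \<le> q \<Longrightarrow> (\<Sum>t\<le>q. (-1) ^ t / (fact t * fact (q - t)) :: 'a :: field_char_0) = 0"
proof -
  assume "1 \<le> q"
  have "(\<Sum>t\<le>q. (-1) ^ t / (fact t * fact (q - t)) :: 'a) = (\<Sum>t\<le>q. (-1) ^ t * of_nat (q choose t)) / fact q"
    by (simp add: sum_divide_distrib binomial_fact field_simps)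
  also have "\<dots> = 0"
    using choose_alternating_sum[of q] \<open>1 \<le> q\<close> by simp
  finally show ?thesis .
qed

lemma sum_alternating_inverse_fact_products_lessThan:
  "1 \<le> q \<Longrightarrow> (\<Sum>t<q. (-1) ^ t / (fact t * fact (q - t)) :: 'a :: field_char_0) = - ((-1) ^ q / fact q)"
  using sum_alternating_inverse_fact_products[of q, where 'a = 'a]
  by (simp add: lessThan_Suc_atMost[symmetric] eq_neg_iff_add_eq_0)

lemma neg_one_power_diff: "m \<le> n \<Longrightarrow> (-1 :: 'a :: ring_1) ^ (n - m) = (-1) ^ n * (-1) ^ m"
proof -
  assume "m \<le> n"
  then obtain k where "n = m + k"
    using le_Suc_ex by blast
  then show ?thesis
    by (simp add: minus_one_power_iff power_add)
qed

lemma sum_alternating_inverse_fact_products_shifted: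
  assumes "1 \<le> n"
  shows "(\<Sum>m<n. (-1) ^ (n - m + 1) / (fact m * fact (n - m)) :: 'a :: field_char_0) = 1 / fact n"
proof -
  have "(\<Sum>m<n. (-1) ^ (n - m + 1) / (fact m * fact (n - m)) :: 'a) =
      (-1) ^ Suc n * (\<Sum>m<n. (-1) ^ m / (fact m * fact (n - m)))"
    by (simp add: sum_distrib_left neg_one_power_diff)
  then show ?thesis
    using sum_alternating_inverse_fact_products_lessThan[OF assms, where 'a = 'a]
    by (simp add: minus_one_power_iff)
qed

lemma sum_odd_inverse_fact_products:
  assumes "1 \<le> n"
  shows "(\<Sum>m<n. (-1) ^ (n - m + 1) * (if odd (n - m) then 1 else 0) / (fact m * fact (n - m)) :: 'a :: field_char_0)
    = 2 ^ (n - 1) / fact n"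
proof -
  have "(\<Sum>m<n. (-1) ^ (n - m + 1) * (if odd (n - m) then 1 else 0) / (fact m * fact (n - m)) :: 'a)
      = (\<Sum>m\<le>n. (if odd (n - m) then 1 else 0) / (fact m * fact (n - m)))"
    by (simp add: lessThan_Suc_atMost[symmetric]) (rule sum.cong, auto simp: minus_one_power_iff)
  also have "\<dots> = (\<Sum>k\<le>n. (if odd k then 1 else 0) / (fact (n - k) * fact k))"
    using sum.atLeastAtMost_rev[of "\<lambda>m. (if odd (n - m) then 1 else 0) / (fact m * fact (n - m) :: 'a)" 0 n]
    by (simp add: atLeast0AtMost mult.commute)
  also have "\<dots> = (\<Sum>k\<le>n. if odd k then of_nat (n choose k) else 0) / fact n"
    unfolding sum_divide_distrib by (rule sum.cong) (auto simp: binomial_fact field_simps)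
  also have "(\<Sum>k\<le>n. if odd k then of_nat (n choose k) else 0 :: 'a) = 2 ^ (n - 1)"
  proof -
    have "2 * (\<Sum>k\<le>n. if odd k then of_nat (n choose k) else 0) = (2 ^ n :: 'a)"
      using choose_odd_sum[of n, where 'a = 'a] assms by simp
    moreover have "(2 :: 'a) ^ n = 2 * 2 ^ (n - 1)"
      using assms by (cases n) auto
    ultimately show ?thesis
      by simp
  qed
  finally show ?thesis .
qed

definition evens_then_odds :: "nat list \<Rightarrow> bool" where
  "evens_then_odds V \<longleftrightarrow> (\<exists>es os. V = es @ os \<and> (\<forall>x\<in>set es. even x) \<and> (\<forall>x\<in>set os. odd x))"

definition odds_then_evens :: "nat list \<Rightarrow> bool" where
  "odds_then_evens V \<longleftrightarrow> (\<exists>os es. V = os @ es \<and> (\<forall>x\<in>set os. odd x) \<and> (\<forall>x\<in>set es. even x))"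

definition odds_evens_odds :: "nat list \<Rightarrow> bool" where
  "odds_evens_odds V \<longleftrightarrow> (\<exists>X Y Z. V = X @ Y @ Z \<and>
     (\<forall>x\<in>set X. odd x) \<and> (\<forall>x\<in>set Y. even x) \<and> (\<forall>x\<in>set Z. odd x))"

lemma OtE_eq_empty_if_evens_then_odds:
  assumes "evens_then_odds V"
  shows "OtE V = {}"
proof -
  obtain es os where V: "V = es @ os" "\<forall>x\<in>set es. even x" "\<forall>x\<in>set os. odd x"
    using assms unfolding evens_then_odds_def by blast
  have False if "i \<in> OtE V" for i
  proof -
    have i: "0 < i" "i < length es + length os" "odd (V ! (i - 1))" "even (V ! i)"
      using that V(1) by (simp_all add: OtE_def)
    show False
    proof (cases "i < length es")
      case True
      then have "V ! (i - 1) \<in> set es"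
        using V(1) by (simp add: nth_append less_imp_diff_less)
      then show False
        using i(3) V(2) by blast
    next
      case False
      then have "V ! i \<in> set os"
        using i(2) V(1) by (simp add: nth_append)
      then show False
        using i(4) V(3) by blast
    qed
  qed
  then show ?thesis
    by blast
qed

lemma evens_then_odds_if_OtE_eq_empty: "OtE V = {} \<Longrightarrow> evens_then_odds V"
proof (induction V)
  case (Cons x V)
  have "OtE V = {}"
    using Cons.prems OtE_append_supset[of "[x]" V] by auto
  then obtain es os where V: "V = es @ os" "\<forall>x\<in>set es. even x" "\<forall>x\<in>set os. odd x"
    using Cons.IH unfolding evens_then_odds_def by blast
  show ?case
  proof (cases "even x")
    case True
    then show ?thesis
      unfolding evens_then_odds_def using V by (intro exI[of _ "x # es"] exI[of _ os]) simp
  next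
    case False
    have "es = []"
    proof (rule ccontr)
      assume "es \<noteq> []"
      then have "1 \<in> OtE (x # V)"
        using False V by (auto simp: OtE_def nth_append neq_Nil_conv)
      then show False
        using Cons.prems by simp
    qed
    then show ?thesis
      unfolding evens_then_odds_def using False V by (intro exI[of _ "[]"] exI[of _ "x # os"]) simp
  qed
qed (simp add: evens_then_odds_def)

lemma OtE_eq_empty_iff: "OtE V = {} \<longleftrightarrow> evens_then_odds V"
  using OtE_eq_empty_if_evens_then_odds evens_then_odds_if_OtE_eq_empty by blast

lemma odds_then_evens_last_odd:
  assumes "odds_then_evens V" "V \<noteq> []" "odd (last V)"
  shows "\<forall>x\<in>set V. odd x"
proof -
  obtain os es where V: "V = os @ es" "\<forall>x\<in>set os. odd x" "\<forall>x\<in>set es. even x"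
    using assms(1) by (auto simp: odds_then_evens_def)
  have "es = []"
  proof (rule ccontr)
    assume "es \<noteq> []"
    then have "last V \<in> set es"
      using V(1) by simp
    then show False
      using V(3) assms(3) by blast
  qed
  then show ?thesis
    using V by simp
qed

lemma odds_then_evens_evens_then_odds_append:
  assumes "odds_then_evens U" "evens_then_odds V"
  shows "odds_evens_odds (U @ V)"
proof -
  obtain os es where U: "U = os @ es" "\<forall>x\<in>set os. odd x" "\<forall>x\<in>set es. even x"
    using assms(1) unfolding odds_then_evens_def by blast
  obtain es' os' where V: "V = es' @ os'" "\<forall>x\<in>set es'. even x" "\<forall>x\<in>set os'. odd x"
    using assms(2) unfolding evens_then_odds_def by blast
  have "U @ V = os @ (es @ es') @ os'" "\<forall>x\<in>set (es @ es'). even x"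
    using U V by auto
  then show ?thesis
    unfolding odds_evens_odds_def using U(2) V(3) by blast
qed

lemma odds_then_evens_imp_odds_evens_odds: "odds_then_evens V \<Longrightarrow> odds_evens_odds V"
  using odds_then_evens_evens_then_odds_append[of V "[]"] by (simp add: evens_then_odds_def)

lemma all_odd_imp_odds_then_evens: "\<forall>x\<in>set V. odd x \<Longrightarrow> odds_then_evens V"
  unfolding odds_then_evens_def by (intro exI[of _ V] exI[of _ "[]"]) simp

lemma all_odd_imp_evens_then_odds: "\<forall>x\<in>set V. odd x \<Longrightarrow> evens_then_odds V"
  unfolding evens_then_odds_def by (intro exI[of _ "[]"] exI[of _ V]) simp

text \<open>The sign of \<open>phi (map sum_list P)\<close> is the product of \<open>(-1)\<^bsup>O(B) + 1\<^esup>\<close> over the blocks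
  \<open>B\<close> of \<open>P\<close>; see \<open>phi_S_eq_signed_sum_odd_last\<close>.\<close>

definition signed_weight :: "nat list \<Rightarrow> complex" where
  "signed_weight B = (-1) ^ (odd_count B + 1) * shuffle_weight B"

lemma signed_weight_eq:
  "signed_weight V = (if evens_then_odds V
     then (-1) ^ (odd_count V + 1) / (fact (odd_count V) * fact (even_count V)) else 0)"
  by (simp add: signed_weight_def shuffle_weight_def block_weight_def OtE_eq_empty_iff)

definition signed_sum :: "nat list \<Rightarrow> complex" where
  "signed_sum G = (\<Sum>P\<in>splittings G. prod_list (map signed_weight P))"

definition signed_sum_odd_last :: "nat list \<Rightarrow> complex" where
  "signed_sum_odd_last G = (\<Sum>P\<in>splittings G - {[]}.
     if odd (sum_list (last P)) then prod_list (map signed_weight P) else 0)"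

lemma even_sum_list_iff: "even (sum_list B) \<longleftrightarrow> even (odd_count B)"
  by (induction B) auto

lemma signed_sum_last_block:
  assumes "G \<noteq> []"
  shows "signed_sum G = (\<Sum>m<length G. signed_sum (take m G) * signed_weight (drop m G))"
proof -
  have "signed_sum G = (\<Sum>P\<in>splittings G - {[]}. prod_list (map signed_weight P))"
    using assms by (simp add: signed_sum_def Nil_in_splittings_iff)
  then show ?thesis
    by (simp add: sum_splittings_last_block signed_sum_def sum_distrib_right)
qed

lemma signed_sum_odd_last_last_block:
  "signed_sum_odd_last G = (\<Sum>m<length G. signed_sum (take m G) * signed_weight (drop m G) *
     (if odd (odd_count (drop m G)) then 1 else 0))"
  unfolding signed_sum_odd_last_def sum_splittings_last_block
  by (auto simp: signed_sum_def sum_distrib_right even_sum_list_iff intro!: sum.cong)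

definition signed_sum_closed :: "nat list \<Rightarrow> complex" where
  "signed_sum_closed G = (if odds_then_evens G
     then (-1) ^ even_count G / (fact (odd_count G) * fact (even_count G)) else 0)"

text \<open>The last-block recursion of \<^const>\<open>signed_sum\<close>, with the sum on the prefix already
  replaced by its closed form and the last block weighted by \<open>\<rho>\<close> of its number of odd parts.\<close>

definition last_block_sum :: "(nat \<Rightarrow> complex) \<Rightarrow> nat list \<Rightarrow> complex" where
  "last_block_sum \<rho> G = (\<Sum>m<length G.
     signed_sum_closed (take m G) * signed_weight (drop m G) * \<rho> (odd_count (drop m G)))"

lemma last_block_sum_all_odd:
  assumes "\<forall>x\<in>set G. odd x"
  shows "last_block_sum \<rho> G =
    (\<Sum>m<length G. (-1) ^ (length G - m + 1) * \<rho> (length G - m) / (fact m * fact (length G - m)))"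
  unfolding last_block_sum_def
proof (rule sum.cong[OF refl])
  fix m assume "m \<in> {..<length G}"
  moreover have "\<forall>x\<in>set (take m G). odd x" "\<forall>x\<in>set (drop m G). odd x"
    using assms by (auto dest: in_set_takeD in_set_dropD)
  ultimately show "signed_sum_closed (take m G) * signed_weight (drop m G) * \<rho> (odd_count (drop m G)) =
      (-1) ^ (length G - m + 1) * \<rho> (length G - m) / (fact m * fact (length G - m))"
    by (simp add: signed_sum_closed_def signed_weight_eq all_odd_imp_odds_then_evens
        all_odd_imp_evens_then_odds filter_True filter_False)
qed

lemma last_block_sum_eq_0:
  assumes "\<not> odds_evens_odds G"
  shows "last_block_sum \<rho> G = 0"
  unfolding last_block_sum_def
proof (intro sum.neutral ballI)
  fix m
  have "\<not> (odds_then_evens (take m G) \<and> evens_then_odds (drop m G))"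
    using assms odds_then_evens_evens_then_odds_append[of "take m G" "drop m G"] by auto
  then show "signed_sum_closed (take m G) * signed_weight (drop m G) * \<rho> (odd_count (drop m G)) = 0"
    by (auto simp: signed_sum_closed_def signed_weight_eq)
qed

text \<open>For \<open>G = X @ Y @ Z\<close> with \<open>X\<close>, \<open>Z\<close> odd and \<open>Y\<close> nonempty even, only the cuts inside \<open>Y\<close>
  (or at its ends) contribute to \<^const>\<open>last_block_sum\<close>.\<close>

context
  fixes X Y Z :: "nat list"
  assumes X: "\<forall>x\<in>set X. odd x" and Y: "\<forall>x\<in>set Y. even x" "Y \<noteq> []" and Z: "\<forall>x\<in>set Z. odd x"
begin

lemma signed_weight_drop_before_evens:
  assumes "m < length X"
  shows "signed_weight (drop m (X @ Y @ Z)) = 0"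
proof -
  have "length X - m \<in> OtE (drop m X @ Y @ Z)"
    using assms X Y by (auto simp: OtE_def nth_append neq_Nil_conv)
  then show ?thesis
    using assms by (auto simp: signed_weight_eq simp flip: OtE_eq_empty_iff)
qed

lemma signed_sum_closed_take_after_evens:
  assumes "length X + length Y < m" "m \<le> length (X @ Y @ Z)"
  shows "signed_sum_closed (take m (X @ Y @ Z)) = 0"
proof -
  define k where "k = m - length X - length Y"
  have "Z \<noteq> []"
    using assms by (cases Z) auto
  then have take: "take m (X @ Y @ Z) = X @ Y @ take k Z" and "take k Z \<noteq> []"
    using assms by (simp_all add: k_def)
  then have "last (take k Z) \<in> set Z"
    by (meson last_in_set in_set_takeD)
  then have "odd (last (take m (X @ Y @ Z)))"
    unfolding take using Z \<open>take k Z \<noteq> []\<close> by simp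
  moreover have "hd Y \<in> set (take m (X @ Y @ Z))" "even (hd Y)"
    unfolding take using Y by simp_all
  ultimately have "\<not> odds_then_evens (take m (X @ Y @ Z))"
    using odds_then_evens_last_odd[of "take m (X @ Y @ Z)"] by (metis empty_iff list.set(1))
  then show ?thesis
    by (simp add: signed_sum_closed_def)
qed

lemma last_block_term_among_evens:
  assumes "t \<le> length Y"
  shows "signed_sum_closed (take (length X + t) (X @ Y @ Z)) * signed_weight (drop (length X + t) (X @ Y @ Z))
      * \<rho> (odd_count (drop (length X + t) (X @ Y @ Z)))
    = (-1) ^ t / (fact (length X) * fact t) *
      ((-1) ^ (length Z + 1) / (fact (length Z) * fact (length Y - t))) * \<rho> (length Z)"
proof -
  have Yt: "\<forall>x\<in>set (take t Y). even x" "\<forall>x\<in>set (drop t Y). even x"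
    using Y by (auto dest: in_set_takeD in_set_dropD)
  have "odds_then_evens (X @ take t Y)" "evens_then_odds (drop t Y @ Z)"
    unfolding odds_then_evens_def evens_then_odds_def using X Z Yt by blast+
  then show ?thesis
    using assms X Z Yt by (simp add: signed_sum_closed_def signed_weight_eq filter_True filter_False)
qed

lemma last_block_sum_odds_evens_odds_sum:
  "last_block_sum \<rho> (X @ Y @ Z) = (-1) ^ (length Z + 1) * \<rho> (length Z) / (fact (length X) * fact (length Z)) *
    (\<Sum>t<(if Z = [] then length Y else Suc (length Y)). (-1) ^ t / (fact t * fact (length Y - t)))"
proof -
  let ?G = "X @ Y @ Z"
  define K where "K = (if Z = [] then length Y else Suc (length Y))"
  define H where "H m = signed_sum_closed (take m ?G) * signed_weight (drop m ?G) * \<rho> (odd_count (drop m ?G))" for m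
  have "(\<Sum>m<length ?G. H m) = (\<Sum>m\<in>{length X..<length X + K}. H m)"
  proof (rule sum.mono_neutral_right)
    show "\<forall>m\<in>{..<length ?G} - {length X..<length X + K}. H m = 0"
      using signed_weight_drop_before_evens signed_sum_closed_take_after_evens
      by (auto simp: H_def K_def not_le split: if_splits)
  qed (auto simp: K_def neq_Nil_conv)
  also have "\<dots> = (\<Sum>t<K. H (length X + t))"
    by (simp add: sum.shift_bounds_nat_ivl[of H 0 "length X" K, simplified] atLeast0LessThan add.commute)
  also have "\<dots> = (\<Sum>t<K. (-1) ^ t / (fact (length X) * fact t) *
      ((-1) ^ (length Z + 1) / (fact (length Z) * fact (length Y - t))) * \<rho> (length Z))"
    unfolding H_def by (intro sum.cong refl last_block_term_among_evens) (auto simp: K_def split: if_splits)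
  finally show ?thesis
    by (simp add: last_block_sum_def H_def K_def sum_distrib_left field_simps)
qed

lemma last_block_sum_odds_evens_odds:
  "last_block_sum \<rho> (X @ Y @ Z) = \<rho> 0 * signed_sum_closed (X @ Y @ Z)"
proof -
  have "1 \<le> length Y"
    using Y(2) by (simp add: Suc_le_eq)
  show ?thesis
  proof (cases "Z = []")
    case True
    then have "odds_then_evens (X @ Y @ Z)"
      unfolding odds_then_evens_def using X Y by auto
    then have "signed_sum_closed (X @ Y @ Z) = (-1) ^ length Y / (fact (length X) * fact (length Y))"
      using True X Y by (simp add: signed_sum_closed_def filter_True filter_False)
    then show ?thesis
      unfolding last_block_sum_odds_evens_odds_sum
      using True sum_alternating_inverse_fact_products_lessThan[OF \<open>1 \<le> length Y\<close>, where 'a = complex]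
      by simp
  next
    case False
    then have "odd (last (X @ Y @ Z))"
      using Z by simp
    moreover have "hd Y \<in> set (X @ Y @ Z)" "even (hd Y)"
      using Y by simp_all
    ultimately have "\<not> odds_then_evens (X @ Y @ Z)"
      using odds_then_evens_last_odd[of "X @ Y @ Z"] by (metis empty_iff list.set(1))
    then show ?thesis
      unfolding last_block_sum_odds_evens_odds_sum
      using False sum_alternating_inverse_fact_products[OF \<open>1 \<le> length Y\<close>, where 'a = complex]
      by (simp add: signed_sum_closed_def lessThan_Suc_atMost)
  qed
qed

end

lemma last_block_sum_not_all_odd:
  assumes "\<not> (\<forall>x\<in>set G. odd x)"
  shows "last_block_sum \<rho> G = \<rho> 0 * signed_sum_closed G"
proof (cases "odds_evens_odds G")
  case False
  then have "\<not> odds_then_evens G"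
    using odds_then_evens_imp_odds_evens_odds by blast
  with False show ?thesis
    by (simp add: last_block_sum_eq_0 signed_sum_closed_def)
next
  case True
  then obtain X Y Z where G: "G = X @ Y @ Z" and X: "\<forall>x\<in>set X. odd x" and Y: "\<forall>x\<in>set Y. even x"
    and Z: "\<forall>x\<in>set Z. odd x"
    unfolding odds_evens_odds_def by (elim exE conjE) (rule that)
  have "Y \<noteq> []"
  proof
    assume "Y = []"
    then have "\<forall>x\<in>set G. odd x"
      using G X Z by (simp add: ball_Un)
    with assms show False ..
  qed
  then show ?thesis
    unfolding G by (rule last_block_sum_odds_evens_odds[OF X Y _ Z])
qed

theorem signed_sum_eq_closed: "signed_sum G = signed_sum_closed G"
proof (induction "length G" arbitrary: G rule: less_induct)
  case less
  show ?case
  proof (cases "G = []")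
    case True
    then show ?thesis
      by (simp add: signed_sum_def signed_sum_closed_def odds_then_evens_def)
  next
    case False
    then have "signed_sum G = last_block_sum (\<lambda>_. 1) G"
      using less by (simp add: signed_sum_last_block last_block_sum_def)
    also have "\<dots> = signed_sum_closed G"
    proof (cases "\<forall>x\<in>set G. odd x")
      case True
      then show ?thesis
        using sum_alternating_inverse_fact_products_shifted[of "length G", where 'a = complex] False
        by (simp add: last_block_sum_all_odd signed_sum_closed_def all_odd_imp_odds_then_evens
            filter_True filter_False Suc_le_eq)
    qed (simp add: last_block_sum_not_all_odd)
    finally show ?thesis .
  qed
qed

lemma signed_sum_odd_last_eq:
  "signed_sum_odd_last G =
    (if G \<noteq> [] \<and> (\<forall>x\<in>set G. odd x) then 2 ^ (length G - 1) / fact (length G) else 0)"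
proof -
  have "signed_sum_odd_last G = last_block_sum (\<lambda>k. if odd k then 1 else 0) G"
    by (simp add: signed_sum_odd_last_last_block signed_sum_eq_closed last_block_sum_def)
  then show ?thesis
    using sum_odd_inverse_fact_products[of "length G", where 'a = complex]
    by (auto simp: last_block_sum_all_odd last_block_sum_not_all_odd Suc_le_eq)
qed

text \<open>For nonempty \<open>G\<close>, \<open>phi_S G\<close> is the value of \<open>\<zeta> \<circ> \<Theta>\<close> on \<open>S\<^sub>G\<close>.\<close>

definition phi_S :: "nat list \<Rightarrow> complex" where
  "phi_S G = (\<Sum>P\<in>splittings G - {[]}. prod_list (map shuffle_weight P) * phi (map sum_list P))"

lemma prod_list_signed_weight:
  "prod_list (map signed_weight P) =
    (-1) ^ (sum_list (map odd_count P) + length P) * prod_list (map shuffle_weight P)"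
  by (induction P) (auto simp: signed_weight_def power_add)

lemma even_sum_list_concat_iff: "even (sum_list (concat P)) \<longleftrightarrow> even (sum_list (map odd_count P))"
  by (induction P) (simp_all add: even_sum_list_iff)

lemma phi_S_eq_signed_sum_odd_last: "phi_S G = 2 * signed_sum_odd_last G"
proof -
  have "prod_list (map shuffle_weight P) * phi (map sum_list P) =
      2 * (if odd (sum_list (last P)) then prod_list (map signed_weight P) else 0)"
    if "P \<in> splittings G - {[]}" for P
  proof -
    have "(-1 :: complex) ^ (sum_list (map sum_list P) + length P) =
        (-1) ^ (sum_list (map odd_count P) + length P)"
      using even_sum_list_concat_iff[of P] by (simp add: minus_one_power_iff sum_list_concat)
    then show ?thesis
      using that by (simp add: phi_def last_map prod_list_signed_weight)
  qed
  then show ?thesis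
    by (simp add: phi_S_def signed_sum_odd_last_def sum_distrib_left)
qed

lemma phi_S_eq:
  "G \<noteq> [] \<Longrightarrow> phi_S G = (if \<forall>x\<in>set G. odd x then 2 ^ length G / fact (length G) else 0)"
  by (cases G) (simp_all add: phi_S_eq_signed_sum_odd_last signed_sum_odd_last_eq)

lemma shuffle_weight_all_odd: "\<forall>x\<in>set G. odd x \<Longrightarrow> shuffle_weight G = 1 / fact (length G)"
  by (simp add: shuffle_weight_def block_weight_def OtE_eq_empty_iff all_odd_imp_evens_then_odds
      filter_True filter_False)

section \<open>\<open>\<Theta>\<close> on shuffle functions\<close>

definition Theta_S_blocks :: "nat list \<Rightarrow> nat list \<Rightarrow> complex" where
  "Theta_S_blocks a b = (\<Sum>P\<in>splittings a. prod_list (map shuffle_weight P) * theta_mono (map sum_list P) b)"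

lemma Theta_S_eq_Theta_S_blocks:
  assumes T: "is_Theta T" and a: "is_comp a"
  shows "T (S a) = Theta_S_blocks a"
proof -
  define A where "A = {c. comp_le c a}"
  have A: "A = map sum_list ` splittings a"
    using map_sum_list_splittings[OF a] by (simp add: A_def)
  have A_props: "finite A" "\<forall>c\<in>A. is_comp c"
    by (simp add: A finite_splittings) (simp add: A_def comp_le_def)
  have "S a = (\<lambda>b. \<Sum>c\<in>A. S a c * M c b)"
  proof
    fix b
    have "(\<Sum>c\<in>A. S a c * M c b) = (\<Sum>c\<in>A. if c = b then S a c else 0)"
      by (intro sum.cong) (auto simp: M_def)
    also have "\<dots> = (if b \<in> A then S a b else 0)"
      using A_props(1) by (simp add: sum.delta')
    also have "\<dots> = S a b"
      by (auto simp: A_def S_def)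
    finally show "S a b = (\<Sum>c\<in>A. S a c * M c b)" ..
  qed
  then have "T (S a) = T (\<lambda>b. \<Sum>c\<in>A. S a c * M c b)"
    by (rule arg_cong)
  also have "\<dots> = (\<lambda>b. \<Sum>c\<in>A. S a c * T (M c) b)"
    by (rule Theta_sum_M[OF T A_props])
  also have "\<dots> = (\<lambda>b. \<Sum>P\<in>splittings a. S a (map sum_list P) * theta_mono (map sum_list P) b)"
    unfolding A using Theta_M_eq_theta_mono[OF T] is_comp_map_sum_list[OF a]
    by (simp add: sum.reindex inj_on_map_sum_list_splittings[OF a])
  also have "\<dots> = Theta_S_blocks a"
    by (simp add: Theta_S_blocks_def S_map_sum_list[OF a] fun_eq_iff)
  finally show ?thesis .
qed

lemma Theta_S_blocks_Nil: "Theta_S_blocks a [] = (if a = [] then 1 else 0)"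
proof -
  have "Theta_S_blocks a [] = (\<Sum>P\<in>splittings a. if P = [] then 1 else 0)"
    unfolding Theta_S_blocks_def by (intro sum.cong) auto
  then show ?thesis
    by (simp add: finite_splittings Nil_in_splittings_iff sum.delta)
qed

lemma Theta_S_blocks_Cons:
  "Theta_S_blocks a (x # b) = (\<Sum>m\<in>{1..length a}.
     if sum_list (take m a) = x then phi_S (take m a) * Theta_S_blocks (drop m a) b else 0)"
proof -
  define h where "h P1 P2 = (if sum_list (concat P1) = x
      then (prod_list (map shuffle_weight P1) * phi (map sum_list P1)) *
           (prod_list (map shuffle_weight P2) * theta_mono (map sum_list P2) b) else 0)" for P1 P2
  have "Theta_S_blocks a (x # b) = (\<Sum>P\<in>splittings a. \<Sum>k\<in>{1..length P}. h (take k P) (drop k P))"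
    unfolding Theta_S_blocks_def theta_mono.simps length_map sum_distrib_left
  proof (intro sum.cong refl)
    fix P k
    have "prod_list (map shuffle_weight P) =
        prod_list (map shuffle_weight (take k P)) * prod_list (map shuffle_weight (drop k P))"
      by (metis append_take_drop_id map_append prod_list.append)
    then show "prod_list (map shuffle_weight P) *
        ((if sum_list (take k (map sum_list P)) = x then phi (take k (map sum_list P)) else 0) *
         theta_mono (drop k (map sum_list P)) b) = h (take k P) (drop k P)"
      by (simp add: h_def take_map drop_map sum_list_concat)
  qed
  also have "\<dots> = (\<Sum>m\<in>{1..length a}. \<Sum>P1\<in>splittings (take m a) - {[]}. \<Sum>P2\<in>splittings (drop m a). h P1 P2)"
    by (rule sum_splittings_cut)
  also have "\<dots> = (\<Sum>m\<in>{1..length a}.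
      if sum_list (take m a) = x then phi_S (take m a) * Theta_S_blocks (drop m a) b else 0)"
  proof (intro sum.cong refl)
    fix m
    have "h P1 P2 = (if sum_list (take m a) = x
        then (prod_list (map shuffle_weight P1) * phi (map sum_list P1)) *
             (prod_list (map shuffle_weight P2) * theta_mono (map sum_list P2) b) else 0)"
      if "P1 \<in> splittings (take m a) - {[]}" for P1 P2
      using that by (simp add: h_def splittings_def)
    then show "(\<Sum>P1\<in>splittings (take m a) - {[]}. \<Sum>P2\<in>splittings (drop m a). h P1 P2) =
        (if sum_list (take m a) = x then phi_S (take m a) * Theta_S_blocks (drop m a) b else 0)"
      by (simp add: phi_S_def Theta_S_blocks_def sum_product)
  qed
  finally show ?thesis .
qed

lemma Theta_S_blocks_all_odd:
  "is_comp a \<Longrightarrow> \<forall>y\<in>set a. odd y \<Longrightarrow> Theta_S_blocks a b = 2 ^ length a * S a b"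
proof (induction b arbitrary: a)
  case Nil
  then show ?case
    by (simp add: Theta_S_blocks_Nil S_Nil)
next
  case (Cons x b)
  have step: "phi_S (take m a) * Theta_S_blocks (drop m a) b =
      2 ^ length a * (shuffle_weight (take m a) * S (drop m a) b)" if "m \<in> {1..length a}" for m
  proof -
    have all_odd: "\<forall>y\<in>set (take m a). odd y" "\<forall>y\<in>set (drop m a). odd y"
      using Cons.prems by (auto dest: in_set_takeD in_set_dropD)
    have "take m a \<noteq> []" "length (take m a) = m"
      using that by auto
    then have "phi_S (take m a) = 2 ^ m * shuffle_weight (take m a)"
      using all_odd(1) by (simp add: phi_S_eq shuffle_weight_all_odd)
    moreover have "Theta_S_blocks (drop m a) b = 2 ^ (length a - m) * S (drop m a) b"
      using Cons.IH[OF is_comp_drop[OF Cons.prems(1)] all_odd(2)] by simp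
    moreover have "(2 :: complex) ^ length a = 2 ^ m * 2 ^ (length a - m)"
      using that by (simp flip: power_add)
    ultimately show ?thesis
      by simp
  qed
  have "Theta_S_blocks a (x # b) = (\<Sum>m\<in>{1..length a}.
      2 ^ length a * (if sum_list (take m a) = x then shuffle_weight (take m a) * S (drop m a) b else 0))"
    unfolding Theta_S_blocks_Cons using step by (intro sum.cong refl) simp
  also have "\<dots> = 2 ^ length a * S a (x # b)"
    using Cons.prems(1) by (simp add: S_Cons sum_distrib_left)
  finally show ?case .
qed

lemma Theta_S_blocks_not_all_odd: "\<not> (\<forall>y\<in>set a. odd y) \<Longrightarrow> Theta_S_blocks a b = 0"
proof (induction b arbitrary: a)
  case Nil
  then show ?case
    by (auto simp: Theta_S_blocks_Nil)
next
  case (Cons x b)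
  have step: "phi_S (take m a) * Theta_S_blocks (drop m a) b = 0" if "m \<in> {1..length a}" for m
  proof (cases "\<forall>y\<in>set (take m a). odd y")
    case True
    moreover have "set a = set (take m a) \<union> set (drop m a)"
      by (simp flip: set_append)
    ultimately have "\<not> (\<forall>y\<in>set (drop m a). odd y)"
      using Cons.prems by blast
    then show ?thesis
      using Cons.IH by simp
  next
    case False
    moreover have "take m a \<noteq> []"
      using that by auto
    ultimately show ?thesis
      by (auto simp: phi_S_eq)
  qed
  then show ?case
    unfolding Theta_S_blocks_Cons by (intro sum.neutral) simp
qed

theorem mainTheorem5:
  fixes a :: "nat list"
    and Theta :: "(nat list \<Rightarrow> complex) \<Rightarrow> (nat list \<Rightarrow> complex)"
  assumes "is_comp a"
    and "is_Theta Theta"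
  shows "Theta (S a) =
    (if (\<forall>x\<in>set a. odd x) then (\<lambda>b. 2 ^ length a * S a b) else (\<lambda>b. 0))"
  using Theta_S_eq_Theta_S_blocks[OF assms(2,1)] Theta_S_blocks_all_odd[OF assms(1)]
    Theta_S_blocks_not_all_odd
  by (simp add: fun_eq_iff)

end
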